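(* Let $\widetilde{\bm{A}}\in\mathbb{C}^{N\times N}$, let $\widetilde{\bm{c}}\in\mathbb{C}^{N}$ be nonzero, and let $h_i\in\mathbb{R}_{>0}$. Let $\bm{V}_{m+1}=[\bm{v}_1,\dots,\bm{v}_{m+1}]$, $\bm{H}_m$, $\bm{K}_m$ and $h_{m+1,m}$ come from a rational Arnoldi decomposition of $\widetilde{\bm{A}}$ with starting vector $\widetilde{\bm{c}}$ (as described in the context), in which the pole of the final iteration is $\xi_{m-1}=\infty$, so that $\bm{K}_m$ is invertible and the rational Krylov relation $$\widetilde{\bm{A}}\bm{V}_m = \bm{V}_m \bm{H}_m \bm{K}_m^{-1} + h_{m+1,m}\, \bm{v}_{m+1} \bm{e}_m^\ast \bm{K}_m^{-1}$$ holds. Then the error of the rational Krylov approximation $\|\widetilde{\bm{c}}\|_2 \bm{V}_m e^{h_i \bm{H}_m\bm{K}_m^{-1}} \bm{e}_1$ to $e^{h_i \widetilde{\bm{A}}}\widetilde{\bm{c}}$ is given by $$e^{h_i \widetilde{\bm{A}}}\widetilde{\bm{c}} - \|\widetilde{\bm{c}}\|_2 \bm{V}_m e^{h_i \bm{H}_m\bm{K}_m^{-1}} \bm{e}_1 = h_i \|\widetilde{\bm{c}}\|_2\, h_{m+1,m} \sum_{k=1}^\infty \left(\bm{e}_m^\ast \bm{K}_m^{-1} \varphi_k(h_i \bm{H}_m\bm{K}_m^{-1}) \bm{e}_1\right) (h_i \widetilde{\bm{A}})^{k-1} \bm{v}_{m+1}.$$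
   Context: The $\varphi$-functions are defined by $\varphi_0(z)=e^z$ and $\varphi_{k}(z)=\sum_{j=0}^\infty \frac{z^j}{(j+k)!}$ for $k\ge 1$; equivalently $\varphi_{k+1}(z)=\frac{\varphi_k(z)-\varphi_k(0)}{z}$ with $\varphi_k(0)=1/k!$; they are applied to square matrices via their power series. The rational Krylov subspace of size $m$ with poles $\xi_1,\dots,\xi_{m-1}\in\mathbb{C}\cup\{\infty\}$ (none equal to an eigenvalue of $\widetilde{\bm{A}}$) is $\mathcal{Q}_m(\widetilde{\bm{A}},\widetilde{\bm{c}})=q_{m-1}(\widetilde{\bm{A}})^{-1}\mathrm{span}\{\widetilde{\bm{c}},\widetilde{\bm{A}}\widetilde{\bm{c}},\dots,\widetilde{\bm{A}}^{m-1}\widetilde{\bm{c}}\}$ with $q_{m-1}(z)=\prod_{j=1}^{m-1}(1-z/\xi_j)$ (factors with $\xi_j=\infty$ are $1$). The rational Arnoldi algorithm produces orthonormal vectors $\bm{v}_1=\widetilde{\bm{c}}/\|\widetilde{\bm{c}}\|_2,\bm{v}_2,\dots,\bm{v}_{m+1}$ (so $\bm{V}_m=[\bm{v}_1,\dots,\bm{v}_m]$ is an orthonormal basis of $\mathcal{Q}_m$ and $\bm{V}_m\bm{e}_1=\widetilde{\bm{c}}/\|\widetilde{\bm{c}}\|_2$) satisfying $\widetilde{\bm{A}}\bm{V}_{m+1}\underline{\bm{K}_m}=\bm{V}_{m+1}\underline{\bm{H}_m}$, where $\underline{\bm{H}_m}=\begin{pmatrix}\bm{H}_m\\ h_{m+1,m}\bm{e}_m^\ast\end{pmatrix}$,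 $\underline{\bm{K}_m}=\begin{pmatrix}\bm{I}_m+\bm{H}_m\bm{D}_m\\ h_{m+1,m}\xi_m^{-1}\bm{e}_m^\ast\end{pmatrix}$, $\bm{D}_m=\mathrm{diag}(\xi_1^{-1},\dots,\xi_m^{-1})$ (with $\infty^{-1}=0$), $\bm{H}_m,\bm{K}_m=\bm{I}_m+\bm{H}_m\bm{D}_m\in\mathbb{C}^{m\times m}$, $h_{m+1,m}\in\mathbb{C}$, and $\bm{e}_1,\bm{e}_m$ are the first and $m$th unit vectors in $\mathbb{C}^m$. With the final pole infinite this yields the relation stated in the claim. *)

theory Defs
  imports "HOL-Analysis.Analysis"
begin

definition smat :: "'a::times \<Rightarrow> 'a^'n^'m \<Rightarrow> 'a^'n^'m" where
  "smat a M = (\<chi> i j. a * M $ i $ j)"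

fun mat_pow :: "'a::semiring_1^'n^'n \<Rightarrow> nat \<Rightarrow> 'a^'n^'n" where
  "mat_pow M 0 = mat 1"
| "mat_pow M (Suc j) = M ** mat_pow M j"

definition mat_exp :: "complex^'n^'n \<Rightarrow> complex^'n^'n" where
  "mat_exp M = (\<Sum>j. smat (1 / of_nat (fact j) :: complex) (mat_pow M j))"

definition phi :: "nat \<Rightarrow> complex^'n^'n \<Rightarrow> complex^'n^'n" where
  "phi k M = (\<Sum>j. smat (1 / of_nat (fact (j + k)) :: complex) (mat_pow M j))"

definition cinner :: "complex^'n \<Rightarrow> complex^'n \<Rightarrow> complex" where
  "cinner x y = (\<Sum>i\<in>UNIV. x $ i * cnj (y $ i))"

definition outer :: "complex^'n \<Rightarrow> complex^'m \<Rightarrow> complex^'m^'n" where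
  "outer x y = (\<chi> i j. x $ i * y $ j)"

definition idx_first :: "'m::{finite,wellorder}" where "idx_first = Min UNIV"
definition idx_last :: "'m::{finite,wellorder}" where "idx_last = Max UNIV"

definition e_first :: "complex^'m::{finite,wellorder}" where "e_first = axis idx_first 1"
definition e_last :: "complex^'m::{finite,wellorder}" where "e_last = axis idx_last 1"

text \<open>Poles in C \<union> {\<infinity>}: None = \<infinity>; inverse with \<infinity>^{-1} = 0.\<close>
definition pole_inv :: "complex option \<Rightarrow> complex" where
  "pole_inv p = (case p of None \<Rightarrow> 0 | Some z \<Rightarrow> inverse z)"

definition diag_mat :: "('m \<Rightarrow> complex) \<Rightarrow> complex^'m^'m" where
  "diag_mat d = (\<chi> i j. if i = j then d i else 0)"

end

theory Submission
  imports Defs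
begin

(* With W = h A and G = h H K^-1, the rational Krylov relation with infinite last pole reads
   W V y = V G y + (h h_{m+1,m} e_m^* K^-1 y) v, so W and G are intertwined by V up to a rank-one
   term. Iterating gives W^j V e_1 - V G^j e_1 = sum_{i<j} (h h_{m+1,m} e_m^* K^-1 G^i e_1) W^(j-1-i) v.
   Dividing by j!, summing over j and regrouping the absolutely convergent double series by the
   power k = j-1-i of W, the coefficient of W^k v becomes
   sum_i e_m^* K^-1 G^i e_1 / (i+k+1)! = e_m^* K^-1 phi_{k+1}(G) e_1; finally c = ||c|| V e_1. *)

lemma smat_of_real: "smat (of_real r) M = r *\<^sub>R M"
  for M :: "'a::real_algebra_1^'n^'m"
  by (simp add: smat_def vec_eq_iff of_real_def)

lemma scaleR_matrix_vector_mult: "(r *\<^sub>R X) *v x = r *\<^sub>R (X *v x)"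
  for X :: "'a::real_algebra_1^'n^'m"
  by (simp add: vec_eq_iff matrix_vector_mult_def scaleR_sum_right)

lemma matrix_vector_mult_scaleR: "X *v (r *\<^sub>R x) = r *\<^sub>R (X *v x)"
  for X :: "'a::real_algebra_1^'n^'m"
  by (simp add: vec_eq_iff matrix_vector_mult_def scaleR_sum_right)

lemma scaleR_vector_scalar_mult: "(r *\<^sub>R c) *s x = r *\<^sub>R (c *s x)"
  for x :: "'a::real_algebra^'n"
  by (simp add: vec_eq_iff)

lemma norm_vector_scalar_mult: "norm (c *s x) = norm c * norm x"
  for x :: "'a::real_normed_div_algebra^'n"
  by (simp add: norm_vec_def norm_mult L2_set_right_distrib)

lemma matrix_vector_mult_axis_nth: "(X *v axis j 1) $ i = X $ i $ j"
  by (simp add: matrix_vector_mult_def axis_def if_distrib sum.delta' cong: if_cong)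

lemma norm_axis: "norm (axis j x) = norm x"
  for x :: "'a::real_normed_vector"
proof -
  have "(\<lambda>i. (norm (axis j x $ i))\<^sup>2) = (\<lambda>i. if i = j then (norm x)\<^sup>2 else 0)"
    by (auto simp: axis_def)
  then show ?thesis
    unfolding norm_vec_def L2_set_def by (simp only:) simp
qed

lemma mat_pow_Suc_mult_vec: "mat_pow M (Suc k) *v x = M *v (mat_pow M k *v x)"
  by (simp add: matrix_vector_mul_assoc)

lemma bounded_linear_matrix_vector_mult_left: "bounded_linear (\<lambda>X::complex^'n^'m. X *v x)"
proof -
  have "linear (\<lambda>X::complex^'n^'m. X *v x)"
    by (rule linearI) (simp_all add: matrix_vector_mult_add_rdistrib scaleR_matrix_vector_mult)
  then show ?thesis
    by (simp add: linear_conv_bounded_linear)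
qed

lemma bounded_linear_vector_scalar_mult_left: "bounded_linear (\<lambda>a::complex. a *s x)"
proof -
  have "linear (\<lambda>a::complex. a *s x)"
    by (rule linearI) (simp_all add: vector_sadd_rdistrib vec_eq_iff)
  then show ?thesis
    by (simp add: linear_conv_bounded_linear)
qed

lemma bounded_linear_vector_scalar_mult_right: "bounded_linear (\<lambda>x::complex^'n. c *s x)"
proof -
  have "linear (\<lambda>x::complex^'n. c *s x)"
    by (rule linearI) (simp_all add: vec_eq_iff)
  then show ?thesis
    by (simp add: linear_conv_bounded_linear)
qed

(* The norm on matrices is the Frobenius norm, so this is Cauchy-Schwarz row by row. *)
lemma norm_matrix_vector_mult_le:
  fixes M :: "'a::real_normed_algebra_1^'n^'m"
  shows "norm (M *v x) \<le> norm M * norm x"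
proof -
  have row: "norm ((M *v x) $ i) \<le> norm (M $ i) * norm x" for i
  proof -
    have "norm ((M *v x) $ i) \<le> (\<Sum>j\<in>UNIV. norm (M $ i $ j) * norm (x $ j))"
      unfolding matrix_vector_mult_def vec_lambda_beta
      by (rule order_trans[OF norm_sum sum_mono[OF norm_mult_ineq]])
    also have "\<dots> \<le> norm (M $ i) * norm x"
      using L2_set_mult_ineq[of "\<lambda>j. norm (M $ i $ j)" "\<lambda>j. norm (x $ j)" UNIV]
      by (simp add: norm_vec_def)
    finally show ?thesis .
  qed
  have "norm (M *v x) \<le> L2_set (\<lambda>i. norm (M $ i) * norm x) UNIV"
    unfolding norm_vec_def[of "M *v x"] by (rule L2_set_mono) (simp_all add: row)
  then show ?thesis
    by (simp add: L2_set_left_distrib norm_vec_def[of M])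
qed

lemma norm_mat_pow_mult_vec_le:
  fixes M :: "'a::real_normed_algebra_1^'n^'n"
  shows "norm (mat_pow M k *v x) \<le> norm M ^ k * norm x"
proof (induction k)
  case 0
  then show ?case by simp
next
  case (Suc k)
  have "norm (mat_pow M (Suc k) *v x) = norm (M *v (mat_pow M k *v x))"
    by (simp only: mat_pow_Suc_mult_vec)
  also have "\<dots> \<le> norm M * norm (mat_pow M k *v x)"
    by (rule norm_matrix_vector_mult_le)
  also have "\<dots> \<le> norm M * (norm M ^ k * norm x)"
    by (intro mult_left_mono Suc.IH) simp
  finally show ?case
    by (simp add: mult_ac)
qed

lemma norm_matrix_le_sum_entries: "norm X \<le> (\<Sum>i\<in>UNIV. \<Sum>j\<in>UNIV. norm (X $ i $ j))"
  unfolding norm_vec_def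
  by (intro order_trans[OF L2_set_le_sum sum_mono] L2_set_le_sum) auto

lemma norm_mat_pow_le:
  fixes M :: "'a::real_normed_algebra_1^'n^'n"
  shows "norm (mat_pow M k) \<le> of_nat CARD('n) ^ 2 * norm M ^ k"
proof -
  have entry: "norm (mat_pow M k $ i $ j) \<le> norm M ^ k" for i j
  proof -
    have "norm (mat_pow M k $ i $ j) \<le> norm (mat_pow M k *v axis j 1)"
      using Finite_Cartesian_Product.norm_nth_le[of "mat_pow M k *v axis j 1" i]
      by (simp add: matrix_vector_mult_axis_nth)
    also have "\<dots> \<le> norm M ^ k"
      using norm_mat_pow_mult_vec_le[of M k "axis j 1"] by (simp add: norm_axis)
    finally show ?thesis .
  qed
  have "norm (mat_pow M k) \<le> (\<Sum>i\<in>(UNIV::'n set). \<Sum>j\<in>(UNIV::'n set). norm M ^ k)"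
    by (rule order_trans[OF norm_matrix_le_sum_entries], intro sum_mono entry)
  then show ?thesis
    by (simp add: power2_eq_square)
qed

lemma phi_eq_suminf: "phi k M = (\<Sum>j. (1 / fact (j + k)) *\<^sub>R mat_pow M j)"
proof -
  have "(1 / of_nat (fact n) :: complex) = of_real (1 / fact n)" for n
    by simp
  then show ?thesis
    unfolding phi_def by (simp only: smat_of_real)
qed

lemma mat_exp_eq_phi_0: "mat_exp M = phi 0 M"
  by (simp add: mat_exp_def phi_def)

lemma summable_phi_series:
  fixes M :: "'a::{real_normed_algebra_1,banach}^'n^'n"
  shows "summable (\<lambda>j. (1 / fact (j + k)) *\<^sub>R mat_pow M j)"
proof (rule summable_comparison_test)
  show "\<exists>N. \<forall>j\<ge>N. norm ((1 / fact (j + k)) *\<^sub>R mat_pow M j)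
          \<le> 1 / fact j * (of_nat CARD('n) ^ 2 * norm M ^ j)"
  proof (intro exI allI impI)
    fix j :: nat
    have "fact j \<le> (fact (j + k) :: real)"
      by (rule fact_mono) simp
    then show "norm ((1 / fact (j + k)) *\<^sub>R mat_pow M j)
        \<le> 1 / fact j * (of_nat CARD('n) ^ 2 * norm M ^ j)"
      using norm_mat_pow_le[of M j] by (simp add: frac_le)
  qed
  show "summable (\<lambda>j. 1 / fact j * (of_nat CARD('n) ^ 2 * norm M ^ j))"
    using summable_mult[OF summable_exp[of "norm M"], of "of_nat CARD('n) ^ 2"]
    by (simp add: field_simps)
qed

lemma sums_phi_mult_vec:
  "(\<lambda>j. (1 / fact (j + k)) *\<^sub>R (mat_pow M j *v x)) sums (phi k M *v x)"
  using bounded_linear.sums[OF bounded_linear_matrix_vector_mult_left[of x]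
      summable_sums[OF summable_phi_series[of k M]]]
  by (simp add: phi_eq_suminf scaleR_matrix_vector_mult)

lemma fact_mult_fact_le_fact_Suc_add: "fact i * fact k \<le> (fact (i + Suc k) :: real)"
proof -
  have "fact i * fact k \<le> (fact (i + k) :: nat)"
    by (rule dvd_imp_le[OF fact_fact_dvd_fact]) simp
  also have "\<dots> \<le> fact (i + Suc k)"
    by (rule fact_mono_nat) simp
  finally show ?thesis
    by (metis of_nat_fact of_nat_le_iff of_nat_mult)
qed

lemma summable_on_product_nonneg:
  fixes a b :: "nat \<Rightarrow> real"
  assumes "\<And>n. 0 \<le> a n" "\<And>n. 0 \<le> b n" "summable a" "summable b"
  shows "(\<lambda>(k, i). a k * b i) summable_on UNIV"
proof -
  have a: "a summable_on UNIV" and b: "b summable_on UNIV"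
    using assms by (simp_all add: summable_on_UNIV_nonneg_real_iff)
  have "(\<lambda>(k, i). a k * b i) summable_on (SIGMA k:UNIV. UNIV)"
  proof (rule summable_on_SigmaI)
    show "((\<lambda>i. case (k, i) of (k, i) \<Rightarrow> a k * b i) has_sum a k * infsum b UNIV) UNIV" for k
      using has_sum_cmult_right[OF has_sum_infsum[OF b], of "a k"] by simp
    show "(\<lambda>k. a k * infsum b UNIV) summable_on UNIV"
      using a by (rule summable_on_cmult_left)
  qed (use assms in simp)
  then show ?thesis
    by simp
qed

lemma sums_diagonal:
  fixes F :: "nat \<Rightarrow> nat \<Rightarrow> 'a::banach"
  assumes abs_sum: "(\<lambda>(k, i). norm (F k i)) summable_on UNIV"
  shows "(\<lambda>n. \<Sum>i\<le>n. F (n - i) i) sums (\<Sum>k. \<Sum>i. F k i)"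
proof -
  define S where "S = infsum (\<lambda>(k, i). F k i) UNIV"
  have total: "((\<lambda>(k, i). F k i) has_sum S) UNIV"
    unfolding S_def using abs_sum
    by (intro has_sum_infsum) (rule abs_summable_summable, simp add: case_prod_unfold)
  have rows: "(F k has_sum (\<Sum>i. F k i)) UNIV" for k
  proof -
    have "(\<lambda>(k, i). norm (F k i)) summable_on range (Pair k)"
      using abs_sum by (rule summable_on_subset_banach) simp
    then have "F k abs_summable_on UNIV"
      by (subst (asm) summable_on_reindex) (auto simp: inj_on_def o_def)
    then have "(F k has_sum infsum (F k) UNIV) UNIV"
      by (intro has_sum_infsum) (rule abs_summable_summable)
    moreover from this have "(\<Sum>i. F k i) = infsum (F k) UNIV"
      by (metis has_sum_imp_sums sums_unique)
    ultimately show ?thesis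
      by simp
  qed
  have "((\<lambda>k. \<Sum>i. F k i) has_sum S) UNIV"
    using total[folded UNIV_Times_UNIV] by (rule has_sum_SigmaD) (simp add: rows)
  then have by_rows: "(\<lambda>k. \<Sum>i. F k i) sums S"
    by (rule has_sum_imp_sums)
  have bij: "bij_betw (\<lambda>(n, i). (n - i, i :: nat)) (SIGMA n:UNIV. {..n}) UNIV"
    by (rule bij_betwI[where g = "\<lambda>(k, i). (k + i, i)"]) auto
  have "((\<lambda>(n, i). F (n - i) i) has_sum S) (SIGMA n:UNIV. {..n})"
    using has_sum_reindex_bij_betw[OF bij, of "\<lambda>(k, i). F k i" S] total
    by (simp add: case_prod_unfold)
  then have "((\<lambda>n. \<Sum>i\<le>n. F (n - i) i) has_sum S) UNIV"
    by (rule has_sum_SigmaD) (simp add: has_sum_finite)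
  then have "(\<lambda>n. \<Sum>i\<le>n. F (n - i) i) sums S"
    by (rule has_sum_imp_sums)
  with by_rows show ?thesis
    by (simp add: sums_iff)
qed

lemma mat_pow_intertwining:
  fixes W :: "'a::field^'n^'n" and V :: "'a^'m^'n" and G :: "'a^'m^'m"
  assumes rel: "\<And>y. W *v (V *v y) = V *v (G *v y) + f y *s v"
  shows "mat_pow W j *v (V *v y) = V *v (mat_pow G j *v y)
           + (\<Sum>i<j. f (mat_pow G i *v y) *s (mat_pow W (j - 1 - i) *v v))"
proof (induction j)
  case 0
  then show ?case
    by simp
next
  case (Suc j)
  have shift: "W *v (mat_pow W (j - Suc i) *v v) = mat_pow W (j - i) *v v" if ij: "i < j" for i
  proof -
    obtain d where "j = Suc (i + d)"
      using less_imp_Suc_add[OF ij] by blast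
    then show ?thesis
      by (simp add: matrix_vector_mul_assoc)
  qed
  have "mat_pow W (Suc j) *v (V *v y) = W *v (mat_pow W j *v (V *v y))"
    by (rule mat_pow_Suc_mult_vec)
  also have "\<dots> = W *v (V *v (mat_pow G j *v y))
      + (\<Sum>i<j. f (mat_pow G i *v y) *s (W *v (mat_pow W (j - 1 - i) *v v)))"
    by (simp add: Suc.IH matrix_vector_right_distrib vec.sum vector_scalar_commute)
  also have "W *v (V *v (mat_pow G j *v y))
      = V *v (mat_pow G (Suc j) *v y) + f (mat_pow G j *v y) *s v"
    by (simp only: rel mat_pow_Suc_mult_vec)
  also have "(\<Sum>i<j. f (mat_pow G i *v y) *s (W *v (mat_pow W (j - 1 - i) *v v)))
      = (\<Sum>i<j. f (mat_pow G i *v y) *s (mat_pow W (Suc j - 1 - i) *v v))"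
    by (intro sum.cong refl) (simp add: shift)
  finally show ?case
    by (simp add: add_ac)
qed

lemma abs_summable_phi_double_series:
  fixes W :: "complex^'n^'n" and G :: "complex^'m^'m"
  assumes "bounded_linear g"
  shows "(\<lambda>(k, i). norm ((1 / fact (i + Suc k)) *\<^sub>R
            (g (mat_pow G i *v y) *s (mat_pow W k *v v)))) summable_on UNIV"
proof -
  obtain B where B: "\<And>x. norm (g x) \<le> norm x * B" "B > 0"
    using bounded_linear.pos_bounded[OF assms] by blast
  define a where "a k = norm v * (norm W ^ k / fact k)" for k
  define b where "b i = B * norm y * (norm G ^ i / fact i)" for i
  have "(\<lambda>(k, i). a k * b i) summable_on UNIV"
  proof (rule summable_on_product_nonneg)
    show "summable a"
      unfolding a_def using summable_mult[OF summable_exp[of "norm W"], of "norm v"]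
      by (simp add: field_simps)
    show "summable b"
      unfolding b_def using summable_mult[OF summable_exp[of "norm G"], of "B * norm y"]
      by (simp add: field_simps)
  qed (use B(2) in \<open>simp_all add: a_def b_def\<close>)
  then show ?thesis
  proof (rule summable_on_comparison_test)
    fix x :: "nat \<times> nat"
    obtain k i where x: "x = (k, i)"
      by (cases x)
    have "norm (g (mat_pow G i *v y)) * norm (mat_pow W k *v v)
        \<le> (norm G ^ i * norm y * B) * (norm W ^ k * norm v)"
      using B(2) order_trans[OF B(1) mult_right_mono[OF norm_mat_pow_mult_vec_le]]
      by (intro mult_mono norm_mat_pow_mult_vec_le) auto
    moreover have "fact i * fact k \<le> (fact (i + Suc k) :: real)"
      by (rule fact_mult_fact_le_fact_Suc_add)
    moreover have "0 \<le> (norm G ^ i * norm y * B) * (norm W ^ k * norm v)"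
      using B(2) by simp
    ultimately have "norm (g (mat_pow G i *v y)) * norm (mat_pow W k *v v) / fact (i + Suc k)
        \<le> (norm G ^ i * norm y * B) * (norm W ^ k * norm v) / (fact i * fact k)"
      by (intro frac_le) auto
    then show "(case x of (k, i) \<Rightarrow> norm ((1 / fact (i + Suc k)) *\<^sub>R
            (g (mat_pow G i *v y) *s (mat_pow W k *v v)))) \<le> (case x of (k, i) \<Rightarrow> a k * b i)"
      by (simp add: x a_def b_def norm_vector_scalar_mult field_simps)
  qed (simp split: prod.split)
qed

lemma mat_exp_intertwining_remainder:
  fixes W :: "complex^'n^'n" and V :: "complex^'m^'n" and G :: "complex^'m^'m"
  assumes g: "bounded_linear g"
    and rel: "\<And>y. W *v (V *v y) = V *v (G *v y) + (\<beta> * g y) *s v"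
  shows "mat_exp W *v (V *v y) - V *v (mat_exp G *v y)
           = \<beta> *s (\<Sum>k. g (phi (Suc k) G *v y) *s (mat_pow W k *v v))"
proof -
  define F where "F k i = (1 / fact (i + Suc k)) *\<^sub>R (g (mat_pow G i *v y) *s (mat_pow W k *v v))"
    for k i
  define D where "D j = mat_pow W j *v (V *v y) - V *v (mat_pow G j *v y)" for j
  have "(\<lambda>j. (1 / fact j) *\<^sub>R D j) sums (mat_exp W *v (V *v y) - V *v (mat_exp G *v y))"
  proof -
    have "(\<lambda>j. (1 / fact j) *\<^sub>R (V *v (mat_pow G j *v y))) sums (V *v (mat_exp G *v y))"
      using bounded_linear.sums[OF matrix_vector_mul_bounded_linear sums_phi_mult_vec[of 0 G y]]
      by (simp add: mat_exp_eq_phi_0 linear_simps)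
    then show ?thesis
      using sums_phi_mult_vec[of 0 W "V *v y"]
      by (simp add: D_def mat_exp_eq_phi_0 scaleR_diff_right sums_diff)
  qed
  then have exp_sums: "(\<lambda>n. (1 / fact (Suc n)) *\<^sub>R D (Suc n))
      sums (mat_exp W *v (V *v y) - V *v (mat_exp G *v y))"
    using sums_Suc_iff[of "\<lambda>j. (1 / fact j) *\<^sub>R D j"] by (simp add: D_def)
  have D_Suc: "(1 / fact (Suc n)) *\<^sub>R D (Suc n) = \<beta> *s (\<Sum>i\<le>n. F (n - i) i)" for n
  proof -
    have "D (Suc n) = (\<Sum>i\<le>n. (\<beta> * g (mat_pow G i *v y)) *s (mat_pow W (n - i) *v v))"
      using mat_pow_intertwining[of W V G "\<lambda>y. \<beta> * g y" v, OF rel, of "Suc n" y]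
      by (simp add: D_def lessThan_Suc_atMost)
    then show ?thesis
      by (simp add: F_def scaleR_sum_right vec.scale_sum_right vec_eq_iff mult.assoc)
  qed
  have diag_sums: "(\<lambda>n. \<beta> *s (\<Sum>i\<le>n. F (n - i) i)) sums (\<beta> *s (\<Sum>k. \<Sum>i. F k i))"
    using abs_summable_phi_double_series[OF g, of G y W v] unfolding F_def[symmetric]
    by (intro bounded_linear.sums[OF bounded_linear_vector_scalar_mult_right] sums_diagonal)
  have row_sum: "(\<Sum>i. F k i) = g (phi (Suc k) G *v y) *s (mat_pow W k *v v)" for k
  proof -
    have "bounded_linear (\<lambda>x. g x *s (mat_pow W k *v v))"
      by (rule bounded_linear_compose[OF bounded_linear_vector_scalar_mult_left g])
    from bounded_linear.sums[OF this sums_phi_mult_vec[of "Suc k" G y]]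
    have "(\<lambda>i. F k i) sums (g (phi (Suc k) G *v y) *s (mat_pow W k *v v))"
      by (simp add: F_def linear_simps[OF g] scaleR_vector_scalar_mult)
    then show ?thesis
      by (rule sums_unique[symmetric])
  qed
  from exp_sums diag_sums have "mat_exp W *v (V *v y) - V *v (mat_exp G *v y)
      = \<beta> *s (\<Sum>k. \<Sum>i. F k i)"
    unfolding D_Suc by (rule sums_unique2)
  then show ?thesis
    by (simp only: row_sum)
qed

lemma matrix_mul_matrix_inv: "invertible A \<Longrightarrow> A ** matrix_inv A = mat 1"
  unfolding invertible_def matrix_inv_def by (rule someI2_ex) auto

lemma cinner_e_last: "cinner z e_last = z $ idx_last"
  by (simp add: cinner_def e_last_def axis_def if_distrib sum.delta' cong: if_cong)

lemma outer_scaled_e_last_mult_vec: "outer x (a *s e_last) *v z = (a * z $ idx_last) *s x"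
proof -
  have "(\<Sum>j\<in>UNIV. x $ i * (a * axis idx_last 1 $ j) * z $ j) = a * z $ idx_last * x $ i" for i
    by (simp add: axis_def mult.commute mult.left_commute if_distrib[where f = "\<lambda>t. _ * t"]
        cong: if_cong)
  then show ?thesis
    by (simp add: vec_eq_iff outer_def matrix_vector_mult_def e_last_def)
qed

lemma rank_one_krylov_relation_mult_vec:
  assumes krylov: "A ** V ** K = V ** H + outer v (\<beta> *s e_last)"
    and right_inv: "K ** Ki = mat 1"
  shows "A *v (V *v y) = V *v ((H ** Ki) *v y) + (\<beta> * cinner (Ki *v y) e_last) *s v"
proof -
  have "A *v (V *v y) = (A ** V) *v ((K ** Ki) *v y)"
    by (simp add: right_inv matrix_vector_mul_assoc)
  also have "\<dots> = (A ** V ** K) *v (Ki *v y)"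
    by (simp add: matrix_vector_mul_assoc matrix_mul_assoc)
  also have "\<dots> = (V ** H + outer v (\<beta> *s e_last)) *v (Ki *v y)"
    by (simp only: krylov)
  also have "\<dots> = V *v ((H ** Ki) *v y) + (\<beta> * cinner (Ki *v y) e_last) *s v"
    by (simp add: matrix_vector_mult_add_rdistrib outer_scaled_e_last_mult_vec cinner_e_last
        flip: matrix_vector_mul_assoc)
  finally show ?thesis .
qed

theorem theorem4p3:
  fixes A :: "complex^'n^'n" and c :: "complex^'n" and h :: real
    and V :: "((complex, 'm::{finite,wellorder}) vec, 'n) vec" and v :: "complex^'n"
    and H K :: "((complex, 'm) vec, 'm) vec" and hm :: complex and \<xi> :: "'m \<Rightarrow> complex option"
  assumes c_nz: "c \<noteq> 0"
    and h_pos: "h > 0"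
    and orth_V: "\<forall>i j. cinner (column i V) (column j V) = (if i = j then 1 else 0)"
    and orth_v: "\<forall>i. cinner v (column i V) = 0"
    and norm_v: "cinner v v = 1"
    and first_col: "column idx_first V = (1 / norm c) *\<^sub>R c"
    and K_def: "K = mat 1 + H ** diag_mat (\<lambda>j. pole_inv (\<xi> j))"
    and last_pole: "\<xi> idx_last = None"
    and arnoldi: "(A ** V) ** K + outer (A *v v) ((hm * pole_inv (\<xi> idx_last)) *s e_last)
                  = V ** H + outer v (hm *s e_last)"
    and K_inv: "invertible K"
  shows "mat_exp (smat (complex_of_real h) A) *v c
           - complex_of_real (norm c) *s (V *v (mat_exp (smat (complex_of_real h) (H ** matrix_inv K)) *v e_first))
         = (complex_of_real h * complex_of_real (norm c) * hm) *s
             (\<Sum>k. cinner (matrix_inv K *v (phi (Suc k) (smat (complex_of_real h) (H ** matrix_inv K)) *v e_first)) e_last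
                   *s (mat_pow (smat (complex_of_real h) A) k *v v))"
proof -
  let ?W = "smat (complex_of_real h) A" and ?G = "smat (complex_of_real h) (H ** matrix_inv K)"
  let ?g = "\<lambda>y. cinner (matrix_inv K *v y) e_last"
  have "A ** V ** K = V ** H + outer v (hm *s e_last)"
    using arnoldi by (simp add: last_pole pole_inv_def outer_def vec_eq_iff)
  from rank_one_krylov_relation_mult_vec[OF this matrix_mul_matrix_inv[OF K_inv]]
  have rel: "?W *v (V *v y) = V *v (?G *v y) + (complex_of_real h * hm * ?g y) *s v" for y
    by (simp add: smat_of_real scaleR_matrix_vector_mult matrix_vector_mult_scaleR
        scaleR_add_right scaleR_vector_scalar_mult[symmetric] scaleR_conv_of_real[where 'a = complex]
        mult.assoc)
  have g: "bounded_linear ?g"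
    unfolding cinner_e_last by (rule bounded_linear_compose[OF bounded_linear_vec_nth]) simp
  have c: "c = complex_of_real (norm c) *s (V *v e_first)"
    using c_nz first_col
    by (simp add: e_first_def matrix_vector_mult_axis_nth column_def vec_eq_iff
        scaleR_conv_of_real[where 'a = complex] flip: mult.assoc of_real_mult)
  show ?thesis
    by (subst (1) c) (simp add: mat_exp_intertwining_remainder[OF g rel] vector_scalar_commute
        vector_ssub_ldistrib[symmetric] vector_smult_assoc mult_ac)
qed

end
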